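(* In the wireless backhaul network model below, consider the long-hop (beamforming) strategy: every hop is a single-stream eigen-beamformed MIMO link between two BSs, each hop must achieve received SNR at least a fixed target $P_0>0$ (independent of $n$), and every BS transmits at a rate bounded by a constant independent of $n$, which it shares among all connections it relays. Then for every $\epsilon>0$, with high probability, the worst-case per source–destination rate satisfies $$R(n)=O\!\left(\frac{\Psi(n)^{\frac{2}{\alpha}}}{n^{\frac12-\epsilon}}\right).$$
   Context: Model: base stations (BSs) are the points of a homogeneous Poisson point process of finite density $\lambda_{\rm b}>0$ restricted to the box $B_n=[0,\sqrt{n}]^2$; source–destination pairs are chosen uniformly at random so each BS is the source of one pair and destination of exactly one pair. Each BS has $\Psi(n)$ antennas ($\Psi$ non-decreasing) and transmit power at most $P$; noise power and bandwidth are $1$. For a link of BS separation $d>1$ with $\Psi(n)\times\Psi(n)$ channel matrix $\mathbf{H}$ with entries $h_{ik}=\sqrt{\min\{1,d^{-\alpha}\}}\exp(j\theta_{ik})$ ($\alpha>2$, arbitrary phases), single-stream eigen-beamforming achieves received SNR $P\lambda_{\max}(\mathbf{H}\mathbf{H}^\dagger)\le P d^{-\alpha}\Psi(n)^2$; thus the SNR target forces each hop length to satisfy $d\le d_{\rm c}=(P/P_0)^{1/\alpha}\Psi(n)^{2/\alpha}$. $R(n)$ is the worst-case rate over all source–destination pairs. $f(n)=O(g(n))$ w.h.p. means there exists a constant $K$ independent of $n$ with $\lim_{n\to\infty}\mathbb{P}(f(n)\le Kg(n))=1$. *)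

theory Defs
  imports "HOL-Probability.Probability"
begin

definition bs_box :: "nat \<Rightarrow> (real \<times> real) set" where
  "bs_box n = cbox (0, 0) (sqrt (real n), sqrt (real n))"

text \<open>A hop of BS separation d can meet the SNR target P0 only if the
  eigen-beamforming SNR upper bound P * min{1, d^-alpha} * Psi(n)^2 is at least P0
  (for d > 1 this is exactly d <= d_c).\<close>
definition hop_ok :: "real \<Rightarrow> real \<Rightarrow> real \<Rightarrow> (nat \<Rightarrow> nat) \<Rightarrow> nat \<Rightarrow> real \<Rightarrow> bool" where
  "hop_ok P P0 \<alpha> \<Psi> n d \<longleftrightarrow>
     P0 \<le> P * (if d \<le> 1 then 1 else d powr (-\<alpha>)) * (real (\<Psi> n))\<^sup>2"

text \<open>Realisation: N BSs at positions x 0, ..., x (N-1); pair s has destination sigma s.\<close>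
definition achievable ::
  "real \<Rightarrow> real \<Rightarrow> real \<Rightarrow> (nat \<Rightarrow> nat) \<Rightarrow> real \<Rightarrow> nat \<Rightarrow> nat \<Rightarrow> (nat \<Rightarrow> real \<times> real)
    \<Rightarrow> (nat \<Rightarrow> nat) \<Rightarrow> real \<Rightarrow> bool" where
  "achievable P P0 \<alpha> \<Psi> C n N x \<sigma> \<rho> \<longleftrightarrow>
     (\<exists>route :: nat \<Rightarrow> nat list. \<exists>r :: nat \<Rightarrow> real.
        (\<forall>s<N. route s \<noteq> [] \<and> hd (route s) = s \<and> last (route s) = \<sigma> s
              \<and> set (route s) \<subseteq> {..<N}
              \<and> (\<forall>k. Suc k < length (route s) \<longrightarrow>
                     hop_ok P P0 \<alpha> \<Psi> n (dist (x (route s ! k)) (x (route s ! Suc k))))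
              \<and> 0 \<le> r s \<and> \<rho> \<le> r s)
      \<and> (\<forall>v<N. (\<Sum>s<N. if v \<in> set (butlast (route s)) then r s else 0) \<le> C))"

definition worst_rate_le ::
  "real \<Rightarrow> real \<Rightarrow> real \<Rightarrow> (nat \<Rightarrow> nat) \<Rightarrow> real \<Rightarrow> nat \<Rightarrow> nat \<Rightarrow> (nat \<Rightarrow> real \<times> real)
    \<Rightarrow> (nat \<Rightarrow> nat) \<Rightarrow> real \<Rightarrow> bool" where
  "worst_rate_le P P0 \<alpha> \<Psi> C n N x \<sigma> b \<longleftrightarrow>
     (\<forall>\<rho>. achievable P P0 \<alpha> \<Psi> C n N x \<sigma> \<rho> \<longrightarrow> \<rho> \<le> b)"

text \<open>Probability of an event E(N, x, sigma) of the random network: a homogeneous PPP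
  of density lambda_b on B_n (N ~ Poisson(lambda_b n), given N the points are iid uniform
  on B_n), and a uniformly random permutation sigma of the N BSs (source-destination pairs).\<close>
definition net_prob ::
  "real \<Rightarrow> nat \<Rightarrow> (nat \<Rightarrow> (nat \<Rightarrow> real \<times> real) \<Rightarrow> (nat \<Rightarrow> nat) \<Rightarrow> bool) \<Rightarrow> real" where
  "net_prob lam_b n E =
     (\<Sum>N. pmf (poisson_pmf (lam_b * real n)) N *
        ((\<Sum>\<sigma>\<in>{\<sigma>. \<sigma> permutes {..<N}}.
            measure (PiM {..<N} (\<lambda>_. uniform_measure lborel (bs_box n)))
              {x \<in> space (PiM {..<N} (\<lambda>_. uniform_measure lborel (bs_box n))). E N x \<sigma>})
         / fact N))"

end

theory Submission
  imports Defs
begin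

(* Idea (transport capacity).  Every feasible hop has length at most
   D = c * Psi(n)^(2/alpha).  If every source-destination pair receives rate rho, then
   rho * (sum over pairs of the source-destination distance) <= D * N * C, because a route of
   length L needs at least L / D distinct transmitting BSs and each BS transmits at most C in
   total.  With high probability the pairs of a random network span total distance of order
   N * sqrt n * n^(-epsilon): a pair is closer than delta * sqrt n (in the first coordinate)
   with probability at most 2 * delta unless it is a fixed point of the pairing, and a random
   pairing has one fixed point on average.  Hence R(n) <= 2 D C / (n^(-epsilon) * sqrt n). *)

text \<open>Counting
  distinct nodes, not hops, matters: a BS relaying a connection twice carries its rate once.\<close>
lemma dist_endpoints_le_hops:
  fixes x :: "'b \<Rightarrow> 'a::metric_space" and l :: "'b list"
  assumes "l \<noteq> []" and "\<And>k. Suc k < length l \<Longrightarrow> dist (x (l!k)) (x (l!Suc k)) \<le> D"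
    and "0 \<le> D"
  shows "dist (x (hd l)) (x (last l)) \<le> D * card (set (butlast l))"
  using assms
proof (induction "length l" arbitrary: l rule: less_induct)
  case less
  show ?case
  proof (cases "hd l \<in> set (tl l)")
    case True
    text \<open>The route revisits its start: cut out the loop and use the shorter route.\<close>
    then obtain j where j: "j < length (tl l)" "tl l ! j = hd l" by (metis in_set_conv_nth)
    define l' where "l' = drop (Suc j) l"
    have "l' \<noteq> []" using j unfolding l'_def by auto
    moreover have "hd l' = hd l" using j less.prems(1) unfolding l'_def
      by (metis drop_Suc hd_drop_conv_nth length_tl)
    moreover have "last l' = last l" using \<open>l' \<noteq> []\<close> unfolding l'_def by (simp add: last_drop)
    moreover have "dist (x (hd l')) (x (last l')) \<le> D * card (set (butlast l'))"
      using less.prems(1,2) \<open>l' \<noteq> []\<close> \<open>0 \<le> D\<close>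
      by (intro less.hyps) (auto simp: l'_def add.commute)
    moreover have "card (set (butlast l')) \<le> card (set (butlast l))"
      unfolding l'_def by (intro card_mono) (auto simp: butlast_drop set_drop_subset)
    then have "D * card (set (butlast l')) \<le> D * card (set (butlast l))"
      using \<open>0 \<le> D\<close> by (intro mult_left_mono) auto
    ultimately show ?thesis by simp
  next
    case False
    text \<open>The start is visited only once: peel off the first hop.\<close>
    obtain a rest where l: "l = a # rest" using less.prems(1) by (cases l) auto
    show ?thesis
    proof (cases "rest = []")
      case True then show ?thesis using l less.prems(3) by simp
    next
      case False
      have first_hop: "dist (x a) (x (hd rest)) \<le> D"
        using less.prems(2)[of 0] l False by (simp add: hd_conv_nth)
      have "dist (x (hd rest)) (x (last rest)) \<le> D * card (set (butlast rest))"
        using less.prems(2,3) l False by (intro less.hyps) (auto, metis Suc_less_eq nth_Cons_Suc)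
      moreover have "card (set (butlast l)) = Suc (card (set (butlast rest)))"
        using \<open>hd l \<notin> set (tl l)\<close> l False by (auto simp: card_insert_if dest: in_set_butlastD)
      ultimately have "dist (x (hd rest)) (x (last l)) + D \<le> D * card (set (butlast l))"
        using l False by (simp add: algebra_simps)
      moreover have "dist (x (hd l)) (x (last l)) \<le> dist (x a) (x (hd rest)) + dist (x (hd rest)) (x (last l))"
        using l by (simp add: dist_triangle)
      ultimately show ?thesis using first_hop by linarith
    qed
  qed
qed

lemma sum_weighted_card_eq_sum_load:
  fixes w :: "'s \<Rightarrow> 'r::comm_semiring_1"
  assumes "finite S" and "finite V" and "\<And>s. s \<in> S \<Longrightarrow> A s \<subseteq> V"
  shows "(\<Sum>s\<in>S. w s * of_nat (card (A s))) = (\<Sum>v\<in>V. \<Sum>s\<in>S. if v \<in> A s then w s else 0)"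
proof -
  have "(\<Sum>s\<in>S. w s * of_nat (card (A s))) = (\<Sum>s\<in>S. \<Sum>v\<in>V. if v \<in> A s then w s else 0)"
  proof (intro sum.cong refl)
    fix s assume "s \<in> S"
    then have "V \<inter> A s = A s" using assms(3) by blast
    then show "w s * of_nat (card (A s)) = (\<Sum>v\<in>V. if v \<in> A s then w s else 0)"
      using assms(2) by (simp add: sum.If_cases mult.commute)
  qed
  also have "\<dots> = (\<Sum>v\<in>V. \<Sum>s\<in>S. if v \<in> A s then w s else 0)"
    by (rule sum.swap)
  finally show ?thesis .
qed

lemma hop_ok_imp_le:
  assumes "0 < P" and "0 < P0" and "0 < \<alpha>" and "1 \<le> \<Psi> n"
    and "hop_ok P P0 \<alpha> \<Psi> n d"
  shows "d \<le> max 1 ((P / P0) powr (1/\<alpha>)) * real (\<Psi> n) powr (2/\<alpha>)"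
proof -
  let ?c = "max 1 ((P / P0) powr (1/\<alpha>))" and ?\<Psi> = "real (\<Psi> n)"
  have psi_pow: "1 \<le> ?\<Psi> powr (2/\<alpha>)" using assms(3,4) by (simp add: ge_one_powr_ge_zero)
  show ?thesis
  proof (cases "d \<le> 1")
    case True
    have "1 \<le> ?c * ?\<Psi> powr (2/\<alpha>)" using psi_pow
      by (metis max.cobounded1 mult_mono' mult_1 zero_le_one)
    then show ?thesis using True by linarith
  next
    case False
    then have "P0 \<le> P * d powr (-\<alpha>) * ?\<Psi>\<^sup>2" using assms(5) unfolding hop_ok_def by simp
    then have "P0 * d powr \<alpha> \<le> P * ?\<Psi>\<^sup>2"
      using False by (simp add: powr_minus field_simps)
    then have "d powr \<alpha> \<le> P / P0 * ?\<Psi>\<^sup>2" using assms(2) by (simp add: field_simps)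
    then have "(d powr \<alpha>) powr (1/\<alpha>) \<le> (P / P0 * ?\<Psi>\<^sup>2) powr (1/\<alpha>)"
      using False assms(3) by (intro powr_mono2) auto
    also have "(d powr \<alpha>) powr (1/\<alpha>) = d" using False assms(3) by (simp add: powr_powr)
    also have "(P / P0 * ?\<Psi>\<^sup>2) powr (1/\<alpha>) = (P/P0) powr (1/\<alpha>) * ?\<Psi> powr (2/\<alpha>)"
    proof -
      have sq: "?\<Psi>\<^sup>2 = ?\<Psi> powr 2" using assms(4) by (simp add: powr_realpow)
      show ?thesis by (simp only: powr_mult sq powr_powr) simp
    qed
    also have "\<dots> \<le> ?c * ?\<Psi> powr (2/\<alpha>)"
      using psi_pow by (intro mult_right_mono) auto
    finally show ?thesis .
  qed
qed

text \<open>Transport-capacity bound: if every pair gets rate rho, then rho times the total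
  source-destination distance is at most D times the total transmitted rate N C, since each
  unit of distance needs a relay and relays are rate limited by C.\<close>
lemma achievable_transport_bound:
  assumes "achievable P P0 \<alpha> \<Psi> C n N x \<sigma> \<rho>" and "0 \<le> \<rho>"
    and hop: "\<And>d. hop_ok P P0 \<alpha> \<Psi> n d \<Longrightarrow> d \<le> D" and "0 \<le> D"
  shows "\<rho> * (\<Sum>s<N. dist (x s) (x (\<sigma> s))) \<le> D * (real N * C)"
proof -
  obtain route r where
    routes: "\<forall>s<N. route s \<noteq> [] \<and> hd (route s) = s \<and> last (route s) = \<sigma> s
              \<and> set (route s) \<subseteq> {..<N}
              \<and> (\<forall>k. Suc k < length (route s) \<longrightarrow>
                     hop_ok P P0 \<alpha> \<Psi> n (dist (x (route s ! k)) (x (route s ! Suc k))))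
              \<and> 0 \<le> r s \<and> \<rho> \<le> r s"
    and load: "\<forall>v<N. (\<Sum>s<N. if v \<in> set (butlast (route s)) then r s else 0) \<le> C"
    using assms(1) unfolding achievable_def by blast
  let ?relays = "\<lambda>s. set (butlast (route s))"
  have pair: "\<rho> * dist (x s) (x (\<sigma> s)) \<le> D * (r s * card (?relays s))" if "s < N" for s
  proof -
    have "dist (x s) (x (\<sigma> s)) \<le> D * card (?relays s)"
      using routes that dist_endpoints_le_hops[OF _ _ \<open>0 \<le> D\<close>, of "route s" x] hop by auto
    moreover have "\<rho> \<le> r s" using routes that by blast
    ultimately have "\<rho> * dist (x s) (x (\<sigma> s)) \<le> r s * (D * card (?relays s))"
      using \<open>0 \<le> \<rho>\<close> \<open>0 \<le> D\<close> by (intro mult_mono) auto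
    then show ?thesis by (simp add: algebra_simps)
  qed
  have double_count:
    "(\<Sum>s<N. r s * card (?relays s)) = (\<Sum>v<N. \<Sum>s<N. if v \<in> ?relays s then r s else 0)"
    using routes by (intro sum_weighted_card_eq_sum_load) (auto dest!: in_set_butlastD)
  have "\<rho> * (\<Sum>s<N. dist (x s) (x (\<sigma> s))) \<le> (\<Sum>s<N. D * (r s * card (?relays s)))"
    unfolding sum_distrib_left using pair by (intro sum_mono) auto
  also have "\<dots> = D * (\<Sum>v<N. \<Sum>s<N. if v \<in> ?relays s then r s else 0)"
    by (simp add: sum_distrib_left double_count[symmetric])
  also have "\<dots> \<le> D * (real N * C)"
    using load sum_mono[of "{..<N}" _ "\<lambda>_. C"] \<open>0 \<le> D\<close> by (intro mult_left_mono) auto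
  finally show ?thesis .
qed

lemma worst_rate_le_of_spread:
  assumes hop: "\<And>d. hop_ok P P0 \<alpha> \<Psi> n d \<Longrightarrow> d \<le> D" and "0 \<le> D" and "0 \<le> C"
    and "0 < S" and "S \<le> (\<Sum>s<N. dist (x s) (x (\<sigma> s)))"
    and "D * (real N * C) / S \<le> b"
  shows "worst_rate_le P P0 \<alpha> \<Psi> C n N x \<sigma> b"
  unfolding worst_rate_le_def
proof (intro allI impI)
  fix \<rho> assume ach: "achievable P P0 \<alpha> \<Psi> C n N x \<sigma> \<rho>"
  have "0 \<le> D * (real N * C) / S" using assms(2,3,4) by simp
  then have "0 \<le> b" using assms(6) by linarith
  show "\<rho> \<le> b"
  proof (cases "\<rho> \<le> 0")
    case False
    then have "\<rho> * S \<le> \<rho> * (\<Sum>s<N. dist (x s) (x (\<sigma> s)))"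
      using assms(5) by (intro mult_left_mono) auto
    also have "\<dots> \<le> D * (real N * C)"
      using False by (intro achievable_transport_bound[OF ach _ hop \<open>0 \<le> D\<close>]) auto
    finally have "\<rho> \<le> D * (real N * C) / S" using assms(4) by (simp add: pos_le_divide_eq)
    then show ?thesis using assms(6) by linarith
  qed (use \<open>0 \<le> b\<close> in simp)
qed

text \<open>Whether a rate is achievable depends on the positions only through the finite graph
  of feasible hops; this makes the event R(n) \<le> b measurable.\<close>
definition hop_graph ::
  "real \<Rightarrow> real \<Rightarrow> real \<Rightarrow> (nat \<Rightarrow> nat) \<Rightarrow> nat \<Rightarrow> nat \<Rightarrow> (nat \<Rightarrow> 'a::metric_space) \<Rightarrow> (nat \<times> nat) set"
  where "hop_graph P P0 \<alpha> \<Psi> n N x =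
    {(i, j). i < N \<and> j < N \<and> hop_ok P P0 \<alpha> \<Psi> n (dist (x i) (x j))}"

lemma achievable_hop_graph_cong:
  assumes "hop_graph P P0 \<alpha> \<Psi> n N x = hop_graph P P0 \<alpha> \<Psi> n N y"
    and "achievable P P0 \<alpha> \<Psi> C n N x \<sigma> \<rho>"
  shows "achievable P P0 \<alpha> \<Psi> C n N y \<sigma> \<rho>"
proof -
  have same_hops: "hop_ok P P0 \<alpha> \<Psi> n (dist (x i) (x j)) \<longleftrightarrow> hop_ok P P0 \<alpha> \<Psi> n (dist (y i) (y j))"
    if "i < N" "j < N" for i j
    using assms(1) that unfolding hop_graph_def set_eq_iff by blast
  obtain route r where
    routes: "\<forall>s<N. route s \<noteq> [] \<and> hd (route s) = s \<and> last (route s) = \<sigma> s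
              \<and> set (route s) \<subseteq> {..<N}
              \<and> (\<forall>k. Suc k < length (route s) \<longrightarrow>
                     hop_ok P P0 \<alpha> \<Psi> n (dist (x (route s ! k)) (x (route s ! Suc k))))
              \<and> 0 \<le> r s \<and> \<rho> \<le> r s"
    and load: "\<forall>v<N. (\<Sum>s<N. if v \<in> set (butlast (route s)) then r s else 0) \<le> C"
    using assms(2) unfolding achievable_def by blast
  have "hop_ok P P0 \<alpha> \<Psi> n (dist (y (route s ! k)) (y (route s ! Suc k)))"
    if "s < N" and "Suc k < length (route s)" for s k
  proof -
    have "set (route s) \<subseteq> {..<N}" using routes that(1) by blast
    moreover have "route s ! k \<in> set (route s)" and "route s ! Suc k \<in> set (route s)"
      using that(2) by auto
    ultimately have "route s ! k < N" and "route s ! Suc k < N" by auto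
    then show ?thesis using routes that same_hops by blast
  qed
  then show ?thesis unfolding achievable_def using routes load by blast
qed

lemma worst_rate_le_hop_graph_cong:
  assumes "hop_graph P P0 \<alpha> \<Psi> n N x = hop_graph P P0 \<alpha> \<Psi> n N y"
  shows "worst_rate_le P P0 \<alpha> \<Psi> C n N x \<sigma> b \<longleftrightarrow> worst_rate_le P P0 \<alpha> \<Psi> C n N y \<sigma> b"
  using achievable_hop_graph_cong[OF assms] achievable_hop_graph_cong[OF assms[symmetric]]
  unfolding worst_rate_le_def by blast

lemma hop_ok_measurable[measurable]: "Measurable.pred borel (hop_ok P P0 \<alpha> \<Psi> n)"
  unfolding hop_ok_def by measurable

text \<open>A level set of the hop graph is cut out by finitely many measurable hop conditions.\<close>
lemma hop_graph_level_set_measurable: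
  assumes [measurable_cong]: "sets M = sets (borel :: ('a::{metric_space, second_countable_topology}) measure)"
  shows "{x \<in> space (PiM {..<N} (\<lambda>_. M)). hop_graph P P0 \<alpha> \<Psi> n N x = G} \<in> sets (PiM {..<N} (\<lambda>_. M))"
proof (cases "G \<subseteq> {..<N} \<times> {..<N}")
  case True
  have "{x \<in> space (PiM {..<N} (\<lambda>_. M)). hop_graph P P0 \<alpha> \<Psi> n N x = G} =
      {x \<in> space (PiM {..<N} (\<lambda>_. M)). \<forall>p\<in>{..<N} \<times> {..<N}.
         hop_ok P P0 \<alpha> \<Psi> n (dist (x (fst p)) (x (snd p))) \<longleftrightarrow> p \<in> G}"
    using True unfolding hop_graph_def by auto
  also have "\<dots> \<in> sets (PiM {..<N} (\<lambda>_. M))"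
  proof -
    have "Measurable.pred (PiM {..<N} (\<lambda>_. M))
        (\<lambda>x. \<forall>p\<in>{..<N} \<times> {..<N}. hop_ok P P0 \<alpha> \<Psi> n (dist (x (fst p)) (x (snd p))) \<longleftrightarrow> p \<in> G)"
    proof (intro pred_intros_finite)
      fix p :: "nat \<times> nat" assume "p \<in> {..<N} \<times> {..<N}"
      then have [measurable]: "fst p \<in> {..<N}" "snd p \<in> {..<N}" by auto
      show "Measurable.pred (PiM {..<N} (\<lambda>_. M))
          (\<lambda>x. hop_ok P P0 \<alpha> \<Psi> n (dist (x (fst p)) (x (snd p))) \<longleftrightarrow> p \<in> G)"
        by (cases "p \<in> G") (simp_all, measurable)
    qed simp
    then show ?thesis by (simp add: pred_def)
  qed
  finally show ?thesis .
next
  case False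
  then have empty: "{x \<in> space (PiM {..<N} (\<lambda>_. M)). hop_graph P P0 \<alpha> \<Psi> n N x = G} = {}"
    unfolding hop_graph_def by auto
  show ?thesis unfolding empty by simp
qed

text \<open>The event is a finite union of level sets of the hop graph.\<close>
lemma worst_rate_event_measurable:
  assumes sets_M: "sets M = sets (borel :: (real \<times> real) measure)"
  shows "{x \<in> space (PiM {..<N} (\<lambda>_. M)). worst_rate_le P P0 \<alpha> \<Psi> C n N x \<sigma> b}
    \<in> sets (PiM {..<N} (\<lambda>_. M))"
proof -
  let ?M = "PiM {..<N} (\<lambda>_. M)" and ?H = "hop_graph P P0 \<alpha> \<Psi> n N"
  let ?E = "{x \<in> space ?M. worst_rate_le P P0 \<alpha> \<Psi> C n N x \<sigma> b}"
  have union: "?E = (\<Union>G\<in>?H ` ?E. {x \<in> space ?M. ?H x = G})"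
  proof (intro equalityI subsetI)
    fix y assume "y \<in> (\<Union>G\<in>?H ` ?E. {x \<in> space ?M. ?H x = G})"
    then obtain x where "x \<in> ?E" "y \<in> space ?M" "?H x = ?H y" by auto
    then show "y \<in> ?E" using worst_rate_le_hop_graph_cong[of P P0 \<alpha> \<Psi> n N x y C \<sigma> b] by simp
  qed auto
  have "?H ` ?E \<subseteq> Pow ({..<N} \<times> {..<N})"
    unfolding hop_graph_def by auto
  then have "finite (?H ` ?E)" by (rule finite_subset) simp
  then show ?thesis
    by (subst union) (intro sets.finite_UN hop_graph_level_set_measurable[OF sets_M])
qed

definition unif_box :: "nat \<Rightarrow> (real \<times> real) measure" where
  "unif_box n = uniform_measure lborel (bs_box n)"

lemma bs_box_sets[measurable]: "bs_box n \<in> sets lborel"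
  unfolding bs_box_def by simp

lemma emeasure_bs_box: "emeasure lborel (bs_box n) = ennreal (real n)"
  unfolding bs_box_def by (simp add: emeasure_lborel_cbox_eq Basis_prod_def)

lemma space_unif_box[simp]: "space (unif_box n) = UNIV"
  and sets_unif_box[simp, measurable_cong]: "sets (unif_box n) = sets borel"
  unfolding unif_box_def by auto

lemma borel_measurable_fst_real[measurable]: "(fst :: real \<times> real \<Rightarrow> real) \<in> borel_measurable borel"
  by (intro borel_measurable_continuous_onI continuous_intros)

lemma prob_space_unif_box: "1 \<le> n \<Longrightarrow> prob_space (unif_box n)"
  unfolding unif_box_def by (rule prob_space_uniform_measure) (auto simp: emeasure_bs_box)

lemma unif_box_strip_le:
  assumes "1 \<le> n" and "0 \<le> r"
  shows "measure (unif_box n) {y. \<bar>fst y - c\<bar> < r} \<le> 2 * r / sqrt (real n)"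
proof -
  let ?strip = "{y::real \<times> real. \<bar>fst y - c\<bar> < r}"
  have strip_sets: "?strip \<in> sets lborel"
    unfolding sets_lborel by (intro borel_open open_Collect_less continuous_intros)
  have "measure (unif_box n) ?strip = measure lborel (bs_box n \<inter> ?strip) / real n"
    unfolding unif_box_def using assms(1) strip_sets
    by (subst measure_uniform_measure) (auto simp: emeasure_bs_box measure_def)
  also have "measure lborel (bs_box n \<inter> ?strip) \<le> measure lborel (cbox (c - r, 0) (c + r, sqrt (real n)))"
  proof (rule measure_mono_fmeasurable)
    show "bs_box n \<inter> ?strip \<subseteq> cbox (c - r, 0) (c + r, sqrt (real n))"
      unfolding bs_box_def by (auto simp: cbox_def Basis_prod_def inner_prod_def)
    show "cbox (c - r, 0) (c + r, sqrt (real n)) \<in> fmeasurable lborel"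
      by simp
  qed (use strip_sets in simp)
  also have "measure lborel (cbox (c - r, 0) (c + r, sqrt (real n))) = 2 * r * sqrt (real n)"
    using assms(2) by (simp add: measure_def emeasure_lborel_cbox_eq Basis_prod_def)
  finally have "measure (unif_box n) ?strip \<le> 2 * r * sqrt (real n) / real n"
    by (simp add: divide_right_mono)
  also have "\<dots> = 2 * r / sqrt (real n)"
    using assms(1) by (simp add: field_simps flip: real_sqrt_mult)
  finally show ?thesis .
qed

lemma PiM_close_pair_le:
  fixes f :: "'a \<Rightarrow> real"
  assumes M: "prob_space M" and f[measurable]: "f \<in> borel_measurable M"
    and I: "finite I" "s \<in> I" "t \<in> I" "s \<noteq> t"
    and strip: "\<And>c. measure M {y \<in> space M. \<bar>f y - c\<bar> < r} \<le> q"
  shows "measure (PiM I (\<lambda>_. M)) {x \<in> space (PiM I (\<lambda>_. M)). \<bar>f (x s) - f (x t)\<bar> < r} \<le> q"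
proof -
  let ?close = "{x \<in> space (PiM I (\<lambda>_. M)). \<bar>f (x s) - f (x t)\<bar> < r}"
  interpret product_sigma_finite "\<lambda>_. M"
    using M by (simp add: product_sigma_finite_def prob_space_imp_sigma_finite)
  define J where "J = I - {t}"
  have IJ: "I = insert t J" "t \<notin> J" "finite J" "s \<in> J" using I unfolding J_def by auto
  have close_sets: "?close \<in> sets (PiM I (\<lambda>_. M))" using I(2,3) by measurable
  have "0 \<le> q" using strip[of 0] measure_nonneg order_trans by blast
  text \<open>Integrate out the coordinate t first: for fixed other coordinates, the event
    asks the point x t to lie in a strip of half-width r around f (x s).\<close>
  have "emeasure (PiM I (\<lambda>_. M)) ?close = (\<integral>\<^sup>+x. indicator ?close x \<partial>PiM I (\<lambda>_. M))"
    using close_sets by simp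
  also have "\<dots> = (\<integral>\<^sup>+x. (\<integral>\<^sup>+y. indicator ?close (x(t := y)) \<partial>M) \<partial>PiM J (\<lambda>_. M))"
    unfolding IJ(1) using IJ close_sets
    by (intro product_nn_integral_insert) (auto simp: IJ(1)[symmetric])
  also have "\<dots> \<le> (\<integral>\<^sup>+x. ennreal q \<partial>PiM J (\<lambda>_. M))"
  proof (rule nn_integral_mono)
    fix x assume x: "x \<in> space (PiM J (\<lambda>_. M))"
    have "(\<lambda>y. indicator ?close (x(t := y)) :: ennreal) =
        indicator {y \<in> space M. \<bar>f y - f (x s)\<bar> < r}"
      using x IJ by (auto simp: indicator_def space_PiM PiE_iff abs_minus_commute fun_eq_iff)
    then have "(\<integral>\<^sup>+y. indicator ?close (x(t := y)) \<partial>M) = emeasure M {y \<in> space M. \<bar>f y - f (x s)\<bar> < r}"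
      by simp
    also have "\<dots> \<le> ennreal q"
      using strip M by (simp add: finite_measure.emeasure_eq_measure prob_space_def ennreal_leI)
    finally show "(\<integral>\<^sup>+y. indicator ?close (x(t := y)) \<partial>M) \<le> ennreal q" .
  qed
  also have "\<dots> = ennreal q"
    using M IJ by (simp add: prob_space.emeasure_space_1 prob_space_PiM)
  finally show ?thesis using \<open>0 \<le> q\<close> by (simp add: measure_def enn2real_leI)
qed

text \<open>Markov's inequality for the number of events that occur: with probability at least
  1 - (2 / |S|) times the sum of their probabilities, fewer than half of them occur.\<close>
lemma (in prob_space) prob_most_events_fail:
  assumes "finite S" and "S \<noteq> {}" and A: "\<And>s. s \<in> S \<Longrightarrow> A s \<in> events"
  shows "1 - 2 / card S * (\<Sum>s\<in>S. prob (A s)) \<le>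
    prob {x \<in> space M. (\<Sum>s\<in>S. indicator (A s) x) < real (card S) / 2}"
proof -
  define u where "u x = (\<Sum>s\<in>S. indicator (A s) x :: real)" for x
  have ind_int: "integrable M (indicator (A s) :: _ \<Rightarrow> real)" if "s \<in> S" for s
    using A[OF that] by (simp add: integrable_real_indicator emeasure_eq_measure)
  then have u_int: "integrable M u" unfolding u_def by (intro Bochner_Integration.integrable_sum) auto
  have "expectation u = (\<Sum>s\<in>S. prob (A s))"
    unfolding u_def using ind_int A by (subst Bochner_Integration.integral_sum) auto
  moreover have "prob {x \<in> space M. real (card S) / 2 \<le> u x} \<le> expectation u / (real (card S) / 2)"
    using assms(1,2) by (intro integral_Markov_inequality_measure[OF u_int, of "space M"])
      (auto simp: u_def intro!: sum_nonneg card_gt_0_iff[THEN iffD2])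
  moreover have "prob {x \<in> space M. u x < real (card S) / 2} = 1 - prob {x \<in> space M. real (card S) / 2 \<le> u x}"
    using u_int by (subst prob_compl[symmetric]) (auto intro!: arg_cong[where f = prob])
  ultimately show ?thesis unfolding u_def by (simp add: field_simps)
qed

text \<open>For a fixed pairing sigma and delta > 0, each pair with sigma s \<noteq> s is
  (delta sqrt n)-close with probability at most 2 delta; if fewer than half of the pairs are
  close, the pairs span total distance at least delta sqrt n N / 2, which bounds R(n).\<close>
lemma prob_worst_rate_le_fixed_pairing:
  assumes "1 \<le> n" and "1 \<le> N" and \<sigma>: "\<sigma> permutes {..<N}" and "0 < \<delta>"
    and hop: "\<And>d. hop_ok P P0 \<alpha> \<Psi> n d \<Longrightarrow> d \<le> D" and "0 \<le> D" and "0 \<le> C"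
    and b: "2 * D * C / (\<delta> * sqrt (real n)) \<le> b"
  shows "1 - 2 / real N * (\<Sum>s<N. if \<sigma> s = s then 1 else 2 * \<delta>) \<le>
    measure (PiM {..<N} (\<lambda>_. unif_box n))
      {x \<in> space (PiM {..<N} (\<lambda>_. unif_box n)). worst_rate_le P P0 \<alpha> \<Psi> C n N x \<sigma> b}"
proof -
  let ?M = "PiM {..<N} (\<lambda>_. unif_box n)"
  define r where "r = \<delta> * sqrt (real n)"
  have "0 < r" using assms(1,4) unfolding r_def by simp
  have prob_box: "prob_space (unif_box n)" using prob_space_unif_box[OF assms(1)] .
  interpret M: prob_space ?M using prob_box by (intro prob_space_PiM) auto
  define A where "A s = {x \<in> space ?M. \<bar>fst (x s) - fst (x (\<sigma> s))\<bar> < r}" for s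
  have \<sigma>_range: "\<sigma> s < N" if "s < N" for s using permutes_in_image[OF \<sigma>] that by simp
  have A_sets: "A s \<in> sets ?M" if "s < N" for s
  proof -
    have [measurable]: "s \<in> {..<N}" "\<sigma> s \<in> {..<N}" using that \<sigma>_range[OF that] by auto
    show ?thesis unfolding A_def by measurable
  qed
  have prob_A: "M.prob (A s) \<le> (if \<sigma> s = s then 1 else 2 * \<delta>)" if "s < N" for s
  proof (cases "\<sigma> s = s")
    case False
    have "M.prob (A s) \<le> 2 * r / sqrt (real n)"
      unfolding A_def using that \<sigma>_range[OF that] False \<open>0 < r\<close>
      by (intro PiM_close_pair_le[OF prob_box]) (auto intro: unif_box_strip_le[OF assms(1)])
    also have "2 * r / sqrt (real n) = 2 * \<delta>" using assms(1) unfolding r_def by simp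
    finally show ?thesis using False by simp
  qed (simp add: M.prob_le_1)
  have spread: "worst_rate_le P P0 \<alpha> \<Psi> C n N x \<sigma> b"
    if x: "x \<in> space ?M" and few: "(\<Sum>s<N. indicator (A s) x) < real N / 2" for x
  proof (rule worst_rate_le_of_spread[OF hop \<open>0 \<le> D\<close> \<open>0 \<le> C\<close>])
    show "0 < r * real N / 2" using \<open>0 < r\<close> assms(2) by simp
    have "r * (1 - indicator (A s) x) \<le> dist (x s) (x (\<sigma> s))" for s
      using x dist_fst_le[of "x s" "x (\<sigma> s)"] \<open>0 < r\<close>
      by (auto simp: A_def indicator_def dist_real_def)
    then have "(\<Sum>s<N. r * (1 - indicator (A s) x)) \<le> (\<Sum>s<N. dist (x s) (x (\<sigma> s)))"
      by (intro sum_mono)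
    moreover have "r * real N / 2 \<le> (\<Sum>s<N. r * (1 - indicator (A s) x))"
      using few \<open>0 < r\<close> by (simp add: sum_subtractf flip: sum_distrib_left)
    ultimately show "r * real N / 2 \<le> (\<Sum>s<N. dist (x s) (x (\<sigma> s)))" by linarith
    show "D * (real N * C) / (r * real N / 2) \<le> b"
      using b assms(2) unfolding r_def by (simp add: field_simps)
  qed
  have "1 - 2 / real N * (\<Sum>s<N. if \<sigma> s = s then 1 else 2 * \<delta>)
      \<le> 1 - 2 / card {..<N} * (\<Sum>s<N. M.prob (A s))"
  proof -
    have "(\<Sum>s<N. M.prob (A s)) \<le> (\<Sum>s<N. if \<sigma> s = s then 1 else 2 * \<delta>)"
      using prob_A by (intro sum_mono) auto
    then show ?thesis by (simp add: divide_right_mono)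
  qed
  also have "\<dots> \<le> M.prob {x \<in> space ?M. (\<Sum>s<N. indicator (A s) x) < real (card {..<N}) / 2}"
    using assms(2) A_sets by (intro M.prob_most_events_fail) (auto simp: lessThan_empty_iff)
  also have "\<dots> \<le> M.prob {x \<in> space ?M. worst_rate_le P P0 \<alpha> \<Psi> C n N x \<sigma> b}"
    using spread by (intro M.finite_measure_mono worst_rate_event_measurable) auto
  finally show ?thesis .
qed

lemma permutations_fixing_point:
  assumes "s \<in> S"
  shows "{\<sigma>. \<sigma> permutes S \<and> \<sigma> s = s} = {\<sigma>. \<sigma> permutes (S - {s})}"
proof (intro equalityI subsetI; clarify)
  fix \<sigma> assume "\<sigma> permutes S" and "\<sigma> s = s"
  then show "\<sigma> permutes (S - {s})" by (auto intro: permutes_superset)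
next
  fix \<sigma> assume "\<sigma> permutes (S - {s})"
  then show "\<sigma> permutes S \<and> \<sigma> s = s"
    by (auto intro: permutes_subset dest: permutes_not_in)
qed

text \<open>Counting fixed points over all permutations: a uniform random permutation has exactly one
  fixed point on average.\<close>
lemma sum_permutations_fixed_points:
  assumes "finite S"
  shows "(\<Sum>\<sigma>\<in>{\<sigma>. \<sigma> permutes S}. card {s \<in> S. \<sigma> s = s}) = card S * fact (card S - 1)"
proof -
  have "(\<Sum>\<sigma>\<in>{\<sigma>. \<sigma> permutes S}. card {s \<in> S. \<sigma> s = s})
      = (\<Sum>\<sigma>\<in>{\<sigma>. \<sigma> permutes S}. \<Sum>s\<in>S. if \<sigma> s = s then 1 else 0)"
    using assms by (simp add: sum.If_cases Int_def)
  also have "\<dots> = (\<Sum>s\<in>S. card {\<sigma>. \<sigma> permutes S \<and> \<sigma> s = s})"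
    using assms by (subst sum.swap) (simp add: sum.If_cases finite_permutations Int_def)
  also have "\<dots> = (\<Sum>s\<in>S. fact (card S - 1))"
    using assms by (intro sum.cong refl) (simp add: permutations_fixing_point card_permutations)
  finally show ?thesis by simp
qed

text \<open>Averaging over a uniform random pairing of N \<ge> 1 BSs, the fixed points (which could
  be short pairs) cost only 2 / N.\<close>
lemma avg_prob_worst_rate_le:
  assumes "1 \<le> n" and "1 \<le> N" and "0 < \<delta>"
    and hop: "\<And>d. hop_ok P P0 \<alpha> \<Psi> n d \<Longrightarrow> d \<le> D" and "0 \<le> D" and "0 \<le> C"
    and b: "2 * D * C / (\<delta> * sqrt (real n)) \<le> b"
  shows "1 - 4 * \<delta> - 2 / real N \<le>
    (\<Sum>\<sigma>\<in>{\<sigma>. \<sigma> permutes {..<N}}. measure (PiM {..<N} (\<lambda>_. unif_box n))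
        {x \<in> space (PiM {..<N} (\<lambda>_. unif_box n)). worst_rate_le P P0 \<alpha> \<Psi> C n N x \<sigma> b}) / fact N"
proof -
  let ?perms = "{\<sigma>. \<sigma> permutes {..<N}}"
  let ?good = "\<lambda>\<sigma>. measure (PiM {..<N} (\<lambda>_. unif_box n))
        {x \<in> space (PiM {..<N} (\<lambda>_. unif_box n)). worst_rate_le P P0 \<alpha> \<Psi> C n N x \<sigma> b}"
  let ?fix = "\<lambda>\<sigma>. real (card {s \<in> {..<N}. \<sigma> s = s})"
  have per_pairing: "1 - 4 * \<delta> - 2 / real N * ?fix \<sigma> \<le> ?good \<sigma>" if "\<sigma> \<in> ?perms" for \<sigma>
  proof -
    have "(\<Sum>s<N. if \<sigma> s = s then 1 else 2 * \<delta>) \<le> (\<Sum>s<N. 2 * \<delta> + (if \<sigma> s = s then 1 else 0))"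
      using \<open>0 < \<delta>\<close> by (intro sum_mono) auto
    also have "\<dots> = 2 * \<delta> * real N + ?fix \<sigma>" by (simp add: sum.distrib sum.If_cases Int_def)
    finally have "2 / real N * (\<Sum>s<N. if \<sigma> s = s then 1 else 2 * \<delta>) \<le> 4 * \<delta> + 2 / real N * ?fix \<sigma>"
      using assms(2) by (simp add: field_simps)
    moreover have "1 - 2 / real N * (\<Sum>s<N. if \<sigma> s = s then 1 else 2 * \<delta>) \<le> ?good \<sigma>"
      using that by (intro prob_worst_rate_le_fixed_pairing[OF assms(1,2) _ \<open>0 < \<delta>\<close> hop assms(5,6) b]) auto
    ultimately show ?thesis by linarith
  qed
  have "(\<Sum>\<sigma>\<in>?perms. ?fix \<sigma>) = real N * fact (N - 1)"
    unfolding of_nat_sum[symmetric] sum_permutations_fixed_points[OF finite_lessThan] by simp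
  moreover have "fact N = real N * fact (N - 1)" using assms(2) by (simp add: fact_reduce)
  ultimately have "fact N * (1 - 4 * \<delta> - 2 / real N) =
      (\<Sum>\<sigma>\<in>?perms. 1 - 4 * \<delta>) - 2 / real N * (\<Sum>\<sigma>\<in>?perms. ?fix \<sigma>)"
    using assms(2) by (simp add: card_permutations field_simps)
  also have "\<dots> = (\<Sum>\<sigma>\<in>?perms. 1 - 4 * \<delta> - 2 / real N * ?fix \<sigma>)"
    by (simp add: sum_subtractf sum_distrib_left)
  also have "\<dots> \<le> (\<Sum>\<sigma>\<in>?perms. ?good \<sigma>)"
    using per_pairing by (intro sum_mono)
  finally show ?thesis by (simp add: field_simps)
qed

text \<open>Averaging a conditional probability q N over a Poisson number of points: a lower bound
  1 - a - c / (N + 1) becomes 1 - a - c / mu, using E[1 / (N + 1)] \<le> 1 / mu.\<close>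
lemma poisson_average_bounds:
  fixes q :: "nat \<Rightarrow> real"
  assumes "0 < \<mu>" and "0 \<le> c" and q01: "\<And>N. 0 \<le> q N \<and> q N \<le> 1"
    and q_lower: "\<And>N. 1 - a - c / (real N + 1) \<le> q N"
  shows "1 - a - c / \<mu> \<le> (\<Sum>N. pmf (poisson_pmf \<mu>) N * q N)"
    and "(\<Sum>N. pmf (poisson_pmf \<mu>) N * q N) \<le> 1"
proof -
  define p where "p N = \<mu> ^ N / fact N * exp (-\<mu>)" for N
  have pmf_p: "pmf (poisson_pmf \<mu>) N = p N" for N unfolding p_def using \<open>0 < \<mu>\<close> by simp
  have p_nonneg: "0 \<le> p N" for N unfolding p_def using \<open>0 < \<mu>\<close> by simp
  have "(\<lambda>N. \<mu> ^ N / fact N * exp (-\<mu>)) sums (exp \<mu> * exp (-\<mu>))"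
    using exp_converges[of \<mu>] by (intro sums_mult2) (simp add: divide_inverse mult.commute)
  then have p_sums: "p sums 1" unfolding p_def by (simp add: exp_minus)
  text \<open>The key identity E[1/(N+1)] = (1 - p 0) / mu for a Poisson variable N.\<close>
  have "p (Suc N) = \<mu> * p N / (real N + 1)" for N
    unfolding p_def by (simp add: fact_Suc field_simps)
  then have "p (Suc N) / \<mu> = p N / (real N + 1)" for N using \<open>0 < \<mu>\<close> by simp
  moreover have "(\<lambda>N. p (Suc N) / \<mu>) sums ((1 - p 0) / \<mu>)"
    using p_sums by (intro sums_divide) (simp add: sums_Suc_iff)
  ultimately have inv_sums: "(\<lambda>N. p N / (real N + 1)) sums ((1 - p 0) / \<mu>)" by simp
  have lower_sums: "(\<lambda>N. p N * (1 - a) - c * (p N / (real N + 1))) sums (1 * (1 - a) - c * ((1 - p 0) / \<mu>))"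
    by (intro sums_diff sums_mult2 sums_mult p_sums inv_sums)
  have pq_summable: "summable (\<lambda>N. p N * q N)"
  proof (rule summable_comparison_test)
    show "\<exists>N0. \<forall>N\<ge>N0. norm (p N * q N) \<le> p N"
      using p_nonneg q01 by (auto intro!: exI[of _ 0] simp: abs_mult mult_left_le)
    show "summable p" using p_sums by (rule sums_summable)
  qed
  have "(\<Sum>N. p N * (1 - a) - c * (p N / (real N + 1))) \<le> (\<Sum>N. p N * q N)"
  proof (rule suminf_le)
    fix N
    have "p N * (1 - a - c / (real N + 1)) \<le> p N * q N"
      using q_lower p_nonneg by (intro mult_left_mono)
    then show "p N * (1 - a) - c * (p N / (real N + 1)) \<le> p N * q N" by (simp add: algebra_simps)
    show "summable (\<lambda>N. p N * (1 - a) - c * (p N / (real N + 1)))"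
      using lower_sums by (rule sums_summable)
  qed (rule pq_summable)
  moreover have "(1 - p 0) / \<mu> \<le> 1 / \<mu>"
    using p_nonneg[of 0] \<open>0 < \<mu>\<close> by (simp add: divide_right_mono)
  then have "c * ((1 - p 0) / \<mu>) \<le> c / \<mu>"
    using \<open>0 \<le> c\<close> by (metis mult_left_mono times_divide_eq_right mult.right_neutral)
  ultimately show "1 - a - c / \<mu> \<le> (\<Sum>N. pmf (poisson_pmf \<mu>) N * q N)"
    using lower_sums unfolding pmf_p by (simp add: sums_iff)
  have "(\<Sum>N. p N * q N) \<le> (\<Sum>N. p N)"
    using pq_summable p_sums p_nonneg q01 by (intro suminf_le) (auto simp: sums_summable mult_left_le)
  then show "(\<Sum>N. pmf (poisson_pmf \<mu>) N * q N) \<le> 1" unfolding pmf_p using p_sums by (simp add: sums_iff)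
qed

lemma net_prob_worst_rate_bounds:
  assumes "0 < lam_b" and "1 \<le> n" and "0 < \<delta>"
    and hop: "\<And>d. hop_ok P P0 \<alpha> \<Psi> n d \<Longrightarrow> d \<le> D" and "0 \<le> D" and "0 \<le> C"
    and b: "2 * D * C / (\<delta> * sqrt (real n)) \<le> b"
  shows "1 - 4 * \<delta> - 4 / (lam_b * real n) \<le>
      net_prob lam_b n (\<lambda>N x \<sigma>. worst_rate_le P P0 \<alpha> \<Psi> C n N x \<sigma> b)"
    and "net_prob lam_b n (\<lambda>N x \<sigma>. worst_rate_le P P0 \<alpha> \<Psi> C n N x \<sigma> b) \<le> 1"
proof -
  define q where "q N = (\<Sum>\<sigma>\<in>{\<sigma>. \<sigma> permutes {..<N}}. measure (PiM {..<N} (\<lambda>_. unif_box n))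
      {x \<in> space (PiM {..<N} (\<lambda>_. unif_box n)). worst_rate_le P P0 \<alpha> \<Psi> C n N x \<sigma> b}) / fact N" for N
  have net_prob_eq: "net_prob lam_b n (\<lambda>N x \<sigma>. worst_rate_le P P0 \<alpha> \<Psi> C n N x \<sigma> b) =
      (\<Sum>N. pmf (poisson_pmf (lam_b * real n)) N * q N)"
    unfolding net_prob_def q_def unif_box_def ..
  have q01: "0 \<le> q N \<and> q N \<le> 1" for N
  proof -
    interpret M: prob_space "PiM {..<N} (\<lambda>_. unif_box n)"
      using prob_space_unif_box[OF assms(2)] by (intro prob_space_PiM) auto
    have "(\<Sum>\<sigma>\<in>{\<sigma>. \<sigma> permutes {..<N}}. M.prob
        {x \<in> space (PiM {..<N} (\<lambda>_. unif_box n)). worst_rate_le P P0 \<alpha> \<Psi> C n N x \<sigma> b})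
      \<le> (\<Sum>\<sigma>\<in>{\<sigma>. \<sigma> permutes {..<N}}. 1)"
      by (intro sum_mono M.prob_le_1)
    then show ?thesis unfolding q_def by (simp add: card_permutations sum_nonneg)
  qed
  have q_lower: "1 - 4 * \<delta> - 4 / (real N + 1) \<le> q N" for N
  proof (cases "N = 0")
    case False
    then have "1 - 4 * \<delta> - 2 / real N \<le> q N"
      unfolding q_def using avg_prob_worst_rate_le[OF assms(2) _ assms(3) hop assms(5,6) b] by simp
    moreover have "2 / real N \<le> 4 / (real N + 1)" using False by (simp add: field_simps)
    ultimately show ?thesis by simp
  qed (use q01[of N] \<open>0 < \<delta>\<close> in simp)
  have "0 < lam_b * real n" using assms(1,2) by simp
  from poisson_average_bounds[OF this _ q01 q_lower] show
    "1 - 4 * \<delta> - 4 / (lam_b * real n) \<le> net_prob lam_b n (\<lambda>N x \<sigma>. worst_rate_le P P0 \<alpha> \<Psi> C n N x \<sigma> b)"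
    "net_prob lam_b n (\<lambda>N x \<sigma>. worst_rate_le P P0 \<alpha> \<Psi> C n N x \<sigma> b) \<le> 1"
    unfolding net_prob_eq by simp_all
qed

lemma error_bound_tendsto_1:
  assumes "0 < lam_b" and "0 < \<epsilon>"
  shows "(\<lambda>n. 1 - 4 * real n powr (-\<epsilon>) - 4 / (lam_b * real n)) \<longlonglongrightarrow> 1"
proof -
  have "(\<lambda>n. real n powr (-\<epsilon>)) \<longlonglongrightarrow> 0"
    using \<open>0 < \<epsilon>\<close> by (intro tendsto_neg_powr filterlim_real_sequentially) auto
  moreover have "(\<lambda>n. 4 / (lam_b * real n)) \<longlonglongrightarrow> 0"
    using tendsto_mult[OF tendsto_const lim_inverse_n', of "4 / lam_b"] by simp
  ultimately have "(\<lambda>n. 1 - 4 * real n powr (-\<epsilon>) - 4 / (lam_b * real n)) \<longlonglongrightarrow> 1 - 4 * 0 - 0"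
    by (intro tendsto_diff tendsto_mult tendsto_const)
  then show ?thesis by simp
qed

text \<open>Main theorem: taking D = c Psi(n)^(2/alpha) and delta = n^(-epsilon), the rate bound
  2 D C / (delta sqrt n) equals K Psi(n)^(2/alpha) / n^(1/2 - epsilon) with K = 2 c C, and
  the probability of the event tends to 1.\<close>
theorem theorem2:
  fixes lam_b P P0 \<alpha> C :: real and \<Psi> :: "nat \<Rightarrow> nat"
  assumes "0 < lam_b" and "0 < P" and "0 < P0" and "2 < \<alpha>" and "0 < C"
    and "mono \<Psi>" and "\<And>n. 1 \<le> \<Psi> n"
  shows "\<forall>\<epsilon>>0. \<exists>K::real.
     (\<lambda>n. net_prob lam_b n (\<lambda>N x \<sigma>. worst_rate_le P P0 \<alpha> \<Psi> C n N x \<sigma>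
            (K * real (\<Psi> n) powr (2 / \<alpha>) / real n powr (1/2 - \<epsilon>))))
     \<longlonglongrightarrow> 1"
proof (intro allI impI)
  fix \<epsilon> :: real assume "0 < \<epsilon>"
  define c where "c = max 1 ((P / P0) powr (1/\<alpha>))"
  let ?f = "\<lambda>n. net_prob lam_b n (\<lambda>N x \<sigma>. worst_rate_le P P0 \<alpha> \<Psi> C n N x \<sigma>
            (2 * c * C * real (\<Psi> n) powr (2 / \<alpha>) / real n powr (1/2 - \<epsilon>)))"
  let ?lower = "\<lambda>n. 1 - 4 * real n powr (-\<epsilon>) - 4 / (lam_b * real n)"
  have bounds: "?lower n \<le> ?f n \<and> ?f n \<le> 1" if "1 \<le> n" for n
  proof -
    have hop: "d \<le> c * real (\<Psi> n) powr (2/\<alpha>)" if "hop_ok P P0 \<alpha> \<Psi> n d" for d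
      unfolding c_def using hop_ok_imp_le[OF assms(2,3) _ assms(7) that] assms(4) by simp
    have "real n powr (-\<epsilon>) * sqrt (real n) = real n powr (1/2 - \<epsilon>)"
      by (simp add: powr_half_sqrt[symmetric] powr_add[symmetric])
    then have rate: "2 * (c * real (\<Psi> n) powr (2/\<alpha>)) * C / (real n powr (-\<epsilon>) * sqrt (real n))
        \<le> 2 * c * C * real (\<Psi> n) powr (2 / \<alpha>) / real n powr (1/2 - \<epsilon>)"
      by (simp add: mult_ac)
    have "0 \<le> c * real (\<Psi> n) powr (2/\<alpha>)" unfolding c_def by simp
    from net_prob_worst_rate_bounds[OF assms(1) that _ hop this _ rate] assms(5) that
    show ?thesis by simp
  qed
  have "eventually (\<lambda>n. ?lower n \<le> ?f n) sequentially"
    and "eventually (\<lambda>n. ?f n \<le> 1) sequentially"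
    using bounds unfolding eventually_sequentially by blast+
  from tendsto_sandwich[OF this error_bound_tendsto_1[OF assms(1) \<open>0 < \<epsilon>\<close>] tendsto_const] have "?f \<longlonglongrightarrow> 1" .
  then show "\<exists>K. (\<lambda>n. net_prob lam_b n (\<lambda>N x \<sigma>. worst_rate_le P P0 \<alpha> \<Psi> C n N x \<sigma>
      (K * real (\<Psi> n) powr (2 / \<alpha>) / real n powr (1/2 - \<epsilon>)))) \<longlonglongrightarrow> 1"
    by blast
qed

end
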